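(* Let $\alpha\in(0,1)$, $\delta>0$, $\beta_0\in(0,-\log(\alpha)/\delta)$, and let $f:\mathbb R_+\to\bar{\mathbb R}$ be non-increasing. Then \[ \max_{\beta\in\mathcal B(\beta_0,\delta)}\big(f(\beta)+\beta^{-1}\log\alpha\big)\le\sup_{\beta>0}\big(f(\beta)+\beta^{-1}\log\alpha\big)\le\max_{\beta\in\mathcal B(\beta_0,\delta)}\big(f(\beta)+\beta^{-1}\log\alpha\big)+\max\{f(0)-f(\beta_0),\,\delta\}. \]
   Context: The finite set $\mathcal B(\beta_0,\delta)=\{\beta_0,\beta_1,\dots,\beta_K\}$ with $0<\beta_0<\beta_1<\dots<\beta_K$ is given by $\beta_{k+1}=\frac{\beta_k\log\alpha}{\beta_k\delta+\log\alpha}$ for the intermediate indices (equivalently $\beta_{k+1}^{-1}=\beta_k^{-1}+\delta/\log\alpha$), continued while the values stay below $-\log(\alpha)/\delta$, and $\beta_K=-\log(\alpha)/\delta$. $\bar{\mathbb R}$ denotes the extended reals. *)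

theory Defs
  imports "HOL-Analysis.Analysis" "HOL-Library.Extended_Real"
begin

(* Intermediate grid points: beta_seq a d b0 0 = b0,
   1 / beta_seq (k+1) = 1 / beta_seq k + d / ln a *)
definition beta_seq :: "real \<Rightarrow> real \<Rightarrow> real \<Rightarrow> nat \<Rightarrow> real" where
  "beta_seq a d b0 k = 1 / (1 / b0 + real k * d / ln a)"

definition beta_grid :: "real \<Rightarrow> real \<Rightarrow> real \<Rightarrow> real set" where
  "beta_grid a d b0 =
     {beta_seq a d b0 k | k. \<forall>j\<le>k. 0 < beta_seq a d b0 j \<and> beta_seq a d b0 j < - ln a / d}
     \<union> {- ln a / d}"

end

theory Submission
  imports Defs
begin

text \<open>Writing \<open>L = - ln \<alpha>\<close>, the reciprocals of the grid points form an arithmetic progression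
  with step \<open>\<delta>/L\<close> starting at \<open>1/\<beta>\<^sub>0\<close>, so every \<open>\<beta> \<ge> \<beta>\<^sub>0\<close> has a grid point
  \<open>\<beta>' \<le> \<beta>\<close> with \<open>L/\<beta>' - L/\<beta> \<le> \<delta>\<close> (for \<open>\<beta> \<ge> L/\<delta>\<close> the endpoint \<open>L/\<delta>\<close> does it).
  As \<open>f\<close> is non-increasing, the objective at \<open>\<beta>\<close> is then at most its value at \<open>\<beta>'\<close> plus \<open>\<delta>\<close>.
  For \<open>\<beta> < \<beta>\<^sub>0\<close> one compares with \<open>\<beta>\<^sub>0\<close> instead, paying \<open>f(0) - f(\<beta>\<^sub>0)\<close>.\<close>

lemma arith_progression_bracket:
  fixes h x y :: real
  assumes "0 < h" "x \<le> y"
  shows "\<exists>k::nat. y - (real k + 1) * h < x \<and> x \<le> y - real k * h"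
proof -
  define k where "k = nat \<lfloor>(y - x) / h\<rfloor>"
  have "0 \<le> (y - x) / h" using assms by simp
  then have "real k \<le> (y - x) / h" "(y - x) / h < real k + 1"
    unfolding k_def by linarith+
  then show ?thesis
    using assms by (intro exI[of _ k]) (simp add: field_simps)
qed

lemma SUP_le_Max_add_gap:
  fixes f :: "real \<Rightarrow> ereal" and h :: "real \<Rightarrow> real" and e :: real
  assumes "finite G" "G \<subseteq> {0<..}" "b0 \<in> G"
    and f_antitone: "\<And>x y. 0 \<le> x \<Longrightarrow> x \<le> y \<Longrightarrow> f y \<le> f x"
    and h_mono: "\<And>x y. 0 < x \<Longrightarrow> x \<le> y \<Longrightarrow> h x \<le> h y"
    and G_below: "\<And>b. b0 \<le> b \<Longrightarrow> \<exists>\<beta>\<in>G. \<beta> \<le> b \<and> h b \<le> h \<beta> + e"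
  shows "(SUP b\<in>{0<..}. f b + ereal (h b))
           \<le> Max ((\<lambda>b. f b + ereal (h b)) ` G) + max (f 0 - f b0) (ereal e)"
proof (rule SUP_least)
  define g where "g b = f b + ereal (h b)" for b
  define M where "M = Max (g ` G)"
  have g_le_M: "g \<beta> \<le> M" if "\<beta> \<in> G" for \<beta>
    unfolding M_def using assms(1) that by simp
  fix b :: real
  assume "b \<in> {0<..}"
  then have b: "0 < b" by simp
  have "g b \<le> M + max (f 0 - f b0) (ereal e)"
  proof (cases "b \<le> b0")
    case True
    have "g b \<le> f 0 + ereal (h b0)"
      unfolding g_def using b True by (intro add_mono f_antitone) (auto intro: h_mono)
    also have "\<dots> \<le> g b0 + (f 0 - f b0)"
      unfolding g_def by (cases "f 0"; cases "f b0") auto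
    also have "\<dots> \<le> M + max (f 0 - f b0) (ereal e)"
      using g_le_M[OF assms(3)] by (intro add_mono) auto
    finally show ?thesis .
  next
    case False
    then have "b0 \<le> b" by simp
    then obtain \<beta> where \<beta>: "\<beta> \<in> G" "\<beta> \<le> b" "h b \<le> h \<beta> + e"
      using G_below by blast
    have "0 < \<beta>" using \<beta>(1) assms(2) by auto
    then have "g b \<le> f \<beta> + ereal (h \<beta> + e)"
      unfolding g_def using \<beta> by (intro add_mono f_antitone) auto
    also have "\<dots> = g \<beta> + ereal e" unfolding g_def by (simp add: add.assoc)
    also have "\<dots> \<le> M + max (f 0 - f b0) (ereal e)"
      using g_le_M[OF \<beta>(1)] by (intro add_mono) auto
    finally show ?thesis .
  qed
  then show "f b + ereal (h b) \<le> Max ((\<lambda>b. f b + ereal (h b)) ` G) + max (f 0 - f b0) (ereal e)"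
    unfolding g_def M_def by simp
qed

lemma beta_seq_in_range_iff:
  assumes "0 < a" "a < 1" "0 < d"
  shows "0 < beta_seq a d b0 j \<and> beta_seq a d b0 j < - ln a / d
           \<longleftrightarrow> (real j + 1) * d < - ln a / b0"
proof -
  define L where "L = - ln a"
  have L: "0 < L" using assms unfolding L_def by simp
  define s where "s = 1 / b0 - real j * d / L"
  have "beta_seq a d b0 j = 1 / s"
    unfolding beta_seq_def s_def L_def by simp
  moreover have "0 < 1 / s \<and> 1 / s < L / d \<longleftrightarrow> d / L < s"
  proof
    assume "0 < 1 / s \<and> 1 / s < L / d"
    then show "d / L < s" using L assms(3) by (auto simp: field_simps)
  next
    assume "d / L < s"
    moreover have "0 < d / L" using L assms(3) by simp
    ultimately have "0 < s" by linarith
    then show "0 < 1 / s \<and> 1 / s < L / d"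
      using \<open>d / L < s\<close> L assms(3) by (simp add: field_simps)
  qed
  moreover have "d / L < s \<longleftrightarrow> (real j + 1) * d < L / b0"
    using L unfolding s_def by (simp add: field_simps)
  ultimately show ?thesis unfolding L_def by simp
qed

lemma beta_grid_eq:
  assumes "0 < a" "a < 1" "0 < d"
  shows "beta_grid a d b0
           = beta_seq a d b0 ` {k. (real k + 1) * d < - ln a / b0} \<union> {- ln a / d}"
proof -
  have "(\<forall>j\<le>k. (real j + 1) * d < - ln a / b0) \<longleftrightarrow> (real k + 1) * d < - ln a / b0" for k
    using assms(3) by (auto intro: le_less_trans[rotated] mult_right_mono)
  then show ?thesis
    unfolding beta_grid_def beta_seq_in_range_iff[OF assms] by auto
qed

lemma finite_beta_grid:
  assumes "0 < a" "a < 1" "0 < d"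
  shows "finite (beta_grid a d b0)"
proof -
  have "k \<le> nat \<lceil>- ln a / b0 / d\<rceil>" if "(real k + 1) * d < - ln a / b0" for k
  proof -
    have "real k * d < - ln a / b0" using that assms(3) by (simp add: algebra_simps)
    then have "real k < - ln a / b0 / d" by (simp only: pos_less_divide_eq[OF assms(3)])
    then show ?thesis by linarith
  qed
  then have "{k. (real k + 1) * d < - ln a / b0} \<subseteq> {..nat \<lceil>- ln a / b0 / d\<rceil>}"
    by auto
  then show ?thesis
    unfolding beta_grid_eq[OF assms] by (meson finite_Un finite_atMost finite_imageI
        finite_subset finite.intros)
qed

lemma beta_grid_pos:
  assumes "0 < a" "a < 1" "0 < d" "b \<in> beta_grid a d b0"
  shows "0 < b"
  using assms ln_less_zero[of a] unfolding beta_grid_def by (auto simp: divide_neg_pos)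

lemma start_in_beta_grid:
  assumes "0 < a" "a < 1" "0 < d" "0 < b0" "b0 < - ln a / d"
  shows "b0 \<in> beta_grid a d b0"
proof -
  have "beta_seq a d b0 0 = b0" by (simp add: beta_seq_def)
  moreover have "(real 0 + 1) * d < - ln a / b0"
    using assms(3-5) by (simp add: field_simps)
  ultimately show ?thesis
    unfolding beta_grid_eq[OF assms(1-3)] by (metis (mono_tags) UnI1 image_eqI mem_Collect_eq)
qed

lemma beta_grid_below:
  assumes "0 < a" "a < 1" "0 < d" "0 < b0" "b0 \<le> b"
  shows "\<exists>\<beta>\<in>beta_grid a d b0. \<beta> \<le> b \<and> ln a / b \<le> ln a / \<beta> + d"
proof -
  define L where "L = - ln a"
  have L: "0 < L" using assms(1,2) unfolding L_def by simp
  have b: "0 < b" using assms(4,5) by linarith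
  show ?thesis
  proof (cases "L / d \<le> b")
    case True
    have "- L / b \<le> 0" using L b by simp
    then show ?thesis
      using True assms(3) unfolding beta_grid_def L_def by auto
  next
    case False
    then have "d / L < 1 / b" using L b assms(3) by (simp add: field_simps)
    moreover have "1 / b \<le> 1 / b0" using assms(4,5) by (simp add: frac_le)
    ultimately obtain k where k: "1 / b0 - (real k + 1) * (d / L) < 1 / b"
        "1 / b \<le> 1 / b0 - real k * (d / L)"
      using arith_progression_bracket[of "d / L" "1 / b" "1 / b0"] L assms(3) by auto
    define s where "s = 1 / b0 - real k * (d / L)"
    have s: "d / L < s" using k \<open>d / L < 1 / b\<close> unfolding s_def by linarith
    have s_pos: "0 < s" using s L assms(3) divide_pos_pos[of d L] by linarith
    have \<beta>: "beta_seq a d b0 k = 1 / s"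
      unfolding beta_seq_def s_def L_def by simp
    have "(real k + 1) * d < L / b0"
      using s L unfolding s_def by (simp add: field_simps)
    then have "beta_seq a d b0 k \<in> beta_grid a d b0"
      unfolding beta_grid_eq[OF assms(1-3)] L_def by auto
    moreover have "1 / s \<le> b"
      using k(2) s_pos b unfolding s_def by (simp add: field_simps)
    moreover have "- L / b \<le> - L * s + d"
    proof -
      have "L * (s - 1 / b) \<le> L * (d / L)"
        using k(1) L unfolding s_def by (intro mult_left_mono) (auto simp: algebra_simps)
      then show ?thesis using L by (simp add: algebra_simps)
    qed
    ultimately show ?thesis
      using \<beta> unfolding L_def by (intro bexI[of _ "beta_seq a d b0 k"]) auto
  qed
qed

theorem lemma15:
  fixes a d b0 :: real and f :: "real \<Rightarrow> ereal"
  assumes "0 < a" "a < 1" "0 < d" "0 < b0" "b0 < - ln a / d"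
    and "\<And>x y. 0 \<le> x \<Longrightarrow> x \<le> y \<Longrightarrow> f y \<le> f x"
  shows "Max ((\<lambda>b. f b + ereal (ln a / b)) ` beta_grid a d b0)
           \<le> (SUP b\<in>{0<..}. f b + ereal (ln a / b))
         \<and> (SUP b\<in>{0<..}. f b + ereal (ln a / b))
           \<le> Max ((\<lambda>b. f b + ereal (ln a / b)) ` beta_grid a d b0)
              + max (f 0 - f b0) (ereal d)"
proof
  let ?G = "beta_grid a d b0" and ?g = "\<lambda>b. f b + ereal (ln a / b)"
  have fin: "finite ?G" using finite_beta_grid[OF assms(1-3)] .
  have pos: "?G \<subseteq> {0<..}" using beta_grid_pos[OF assms(1-3)] by blast
  have start: "b0 \<in> ?G" using start_in_beta_grid[OF assms(1-5)] .
  have "Max (?g ` ?G) \<in> ?g ` ?G" using fin start by (intro Max_in) auto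
  then obtain \<beta> where "\<beta> \<in> ?G" "Max (?g ` ?G) = ?g \<beta>" by blast
  then show "Max (?g ` ?G) \<le> (SUP b\<in>{0<..}. ?g b)"
    using pos by (auto intro: SUP_upper)
  have ln_div_mono: "ln a / x \<le> ln a / y" if "0 < x" "x \<le> y" for x y
  proof -
    have "- ln a / y \<le> - ln a / x"
      using that ln_less_zero[OF assms(1,2)] by (intro divide_left_mono) auto
    then show ?thesis by simp
  qed
  show "(SUP b\<in>{0<..}. ?g b) \<le> Max (?g ` ?G) + max (f 0 - f b0) (ereal d)"
    using fin pos start assms(6) ln_div_mono beta_grid_below[OF assms(1-4)]
    by (rule SUP_le_Max_add_gap)
qed

end
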